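(* Let $n\ge3$, $a>0$, $\sigma>1/2$. Let $V_0(x)=V_0(|x|)$ be a radially symmetric, radially decreasing, real-valued $C^1$ function on $\mathbb{R}^n$, and let $c=(c_1,\vec 0)\in\mathbb{R}^n$ with $\vec0\in\mathbb{R}^{n-1}$. Writing $x=(x_1,\vec y)\in\mathbb{R}\times\mathbb{R}^{n-1}$, we have, pointwise for $x\ne0$, $$ i[V_0(x),\gamma_{-c}+\gamma_c]\ \ge\ -2V_0'(|x|)\,\min\{f(|x+c|),f(|x-c|)\}\,\frac{2|\vec y|^2}{|x|}\,\frac{1}{|x|+|c|}\ \ge\ 0. $$
   Context: Notation: $g(r)=(1+ar^2)^{-\sigma/2}$; $f(r)=\int_0^r g^2(s)\,ds$; $F(x)=\int_0^{|x|}f(t)\,dt$; for $c\in\mathbb{R}^n$, $F_c(x)=F(x-c)$ and $\gamma_c=i[-\Delta,F_c]=-i(\nabla\cdot\nabla F_c+\nabla F_c\cdot\nabla)$. For a potential $V$, the commutator $i[V,\gamma_c]$ is the multiplication operator by the function $-2\nabla F_c\cdot\nabla V$. $V_0'$ denotes the radial derivative. *)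

theory Defs
  imports "HOL-Analysis.Analysis"
begin

definition gfun :: "real \<Rightarrow> real \<Rightarrow> real \<Rightarrow> real" where
  "gfun a \<sigma> r = (1 + a * r\<^sup>2) powr (- \<sigma> / 2)"

definition ffun :: "real \<Rightarrow> real \<Rightarrow> real \<Rightarrow> real" where
  "ffun a \<sigma> r = integral {0..r} (\<lambda>s. (gfun a \<sigma> s)\<^sup>2)"

definition Ffun :: "real \<Rightarrow> real \<Rightarrow> 'a::real_normed_vector \<Rightarrow> real" where
  "Ffun a \<sigma> x = integral {0..norm x} (ffun a \<sigma>)"

definition Fc :: "real \<Rightarrow> real \<Rightarrow> 'a::real_normed_vector \<Rightarrow> 'a \<Rightarrow> real" where
  "Fc a \<sigma> c x = Ffun a \<sigma> (x - c)"

definition grad :: "('a::euclidean_space \<Rightarrow> real) \<Rightarrow> 'a \<Rightarrow> 'a" where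
  "grad h x = (\<Sum>i\<in>Basis. frechet_derivative h (at x) i *\<^sub>R i)"

text \<open>The function by which the commutator i[V, gamma_c] acts: -2 grad F_c . grad V.\<close>
definition comm_fun :: "real \<Rightarrow> real \<Rightarrow> ('a::euclidean_space \<Rightarrow> real) \<Rightarrow> 'a \<Rightarrow> 'a \<Rightarrow> real" where
  "comm_fun a \<sigma> V c x = - 2 * (grad (Fc a \<sigma> c) x \<bullet> grad V x)"

end

theory Submission
  imports Defs
begin

text \<open>
  All functions involved are radial about some centre, so their gradients are radial:
  \<open>\<nabla>V(x) = V\<^sub>0'(|x|) x/|x|\<close> and \<open>\<nabla>F\<^sub>c(x) = f(|x-c|) (x-c)/|x-c|\<close>. Hence the commutator sum equals
  \<open>-2V\<^sub>0'(|x|)/|x|\<close> times \<open>f(|x+c|) (x+c)\<cdot>x/|x+c| + f(|x-c|) (x-c)\<cdot>x/|x-c|\<close>, and the prefactor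
  is nonnegative because \<open>V\<^sub>0\<close> is decreasing. Writing \<open>x = (x\<^sub>1, y)\<close>, each inner product \<open>(x\<plusminus>c)\<cdot>x\<close> is \<open>x\<^sub>1(x\<^sub>1\<plusminus>c\<^sub>1) + |y|\<^sup>2\<close>.
  The \<open>|y|\<^sup>2\<close> parts give the lower bound, since \<open>|x\<plusminus>c| \<le> |x| + |c|\<close> and each \<open>f\<close>-value is at least
  the minimum. The \<open>x\<^sub>1\<close> parts have a nonnegative sum: \<open>f\<close> is increasing, so the larger of the two
  distances carries the larger weight, and \<open>t \<mapsto> t/\<surd>(t\<^sup>2+|y|\<^sup>2)\<close> is increasing.
\<close>

lemma gfun_sq:
  assumes "a \<ge> 0"
  shows "(gfun a \<sigma> s)\<^sup>2 = (1 + a * s\<^sup>2) powr (- \<sigma>)"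
proof -
  have "0 < 1 + a * s\<^sup>2" using assms by (simp add: add_pos_nonneg)
  then show ?thesis
    unfolding gfun_def by (simp add: powr_powr[symmetric] power2_eq_square powr_add[symmetric])
qed

lemma gfun_sq_le_1:
  assumes "a \<ge> 0" "\<sigma> \<ge> 0"
  shows "(gfun a \<sigma> s)\<^sup>2 \<le> 1"
proof -
  have "1 \<le> (1 + a * s\<^sup>2) powr \<sigma>" using assms by (simp add: ge_one_powr_ge_zero)
  then show ?thesis by (simp add: gfun_sq assms powr_minus_divide divide_le_eq_1)
qed

lemma continuous_on_gfun_sq:
  assumes "a \<ge> 0"
  shows "continuous_on S (\<lambda>s. (gfun a \<sigma> s)\<^sup>2)"
proof -
  have "0 < 1 + a * s\<^sup>2" for s using assms by (simp add: add_pos_nonneg)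
  then show ?thesis unfolding gfun_sq[OF assms] by (intro continuous_intros) (metis less_irrefl)
qed

lemma integrable_gfun_sq: "a \<ge> 0 \<Longrightarrow> (\<lambda>s. (gfun a \<sigma> s)\<^sup>2) integrable_on {u..v}"
  by (intro integrable_continuous_interval continuous_on_gfun_sq)

lemma ffun_0: "ffun a \<sigma> 0 = 0"
  unfolding ffun_def by simp

lemma ffun_nonneg: "a \<ge> 0 \<Longrightarrow> 0 \<le> ffun a \<sigma> r"
  unfolding ffun_def by (intro integral_nonneg integrable_gfun_sq) auto

lemma ffun_le:
  assumes "a \<ge> 0" "\<sigma> \<ge> 0" "0 \<le> r"
  shows "ffun a \<sigma> r \<le> r"
proof -
  have "ffun a \<sigma> r \<le> integral {0..r} (\<lambda>s. 1)"
    unfolding ffun_def by (intro integral_le integrable_gfun_sq gfun_sq_le_1) (use assms in auto)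
  then show ?thesis using assms by simp
qed

lemma mono_on_ffun: "a \<ge> 0 \<Longrightarrow> mono_on {0..} (ffun a \<sigma>)"
  unfolding ffun_def by (intro mono_onI integral_subset_le integrable_gfun_sq) auto

lemma continuous_on_ffun: "a \<ge> 0 \<Longrightarrow> continuous_on {0..v} (ffun a \<sigma>)"
  unfolding ffun_def[abs_def] by (intro indefinite_integral_continuous_1 integrable_gfun_sq)

lemma has_real_derivative_integral_ffun:
  assumes "a \<ge> 0" "r > 0"
  shows "((\<lambda>t. integral {0..t} (ffun a \<sigma>)) has_real_derivative ffun a \<sigma> r) (at r)"
proof -
  have "((\<lambda>t. integral {0..t} (ffun a \<sigma>)) has_real_derivative ffun a \<sigma> r) (at r within {0..r + 1})"
    by (intro integral_has_real_derivative continuous_on_ffun) (use assms in auto)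
  moreover have "at r within {0..r + 1} = at r"
    by (intro at_within_interior) (use assms in auto)
  ultimately show ?thesis by simp
qed

lemma abs_Ffun_le:
  assumes "a \<ge> 0" "\<sigma> \<ge> 0"
  shows "\<bar>Ffun a \<sigma> x\<bar> \<le> (norm x)\<^sup>2"
proof -
  have int: "ffun a \<sigma> integrable_on {0..norm x}"
    by (intro integrable_continuous_interval continuous_on_ffun assms)
  have "0 \<le> Ffun a \<sigma> x"
    unfolding Ffun_def by (intro integral_nonneg int ffun_nonneg assms)
  moreover have "Ffun a \<sigma> x \<le> integral {0..norm x} (\<lambda>t. norm x)"
    unfolding Ffun_def by (intro integral_le int) (use assms in \<open>auto intro: order_trans[OF ffun_le]\<close>)
  ultimately show ?thesis by (simp add: power2_eq_square)
qed

lemma has_derivative_radial: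
  fixes w :: "'a::real_inner"
  assumes "(\<phi> has_real_derivative d) (at (norm w))" "w \<noteq> 0"
  shows "((\<lambda>v. \<phi> (norm v)) has_derivative (\<lambda>h. ((d / norm w) *\<^sub>R w) \<bullet> h)) (at w)"
  using has_derivative_compose[OF has_derivative_norm[OF assms(2)]
      has_field_derivative_imp_has_derivative[OF assms(1)]]
  by (rule has_derivative_eq_rhs) (auto simp: o_def sgn_div_norm inner_commute divide_inverse mult.commute)

lemma Ffun_has_derivative:
  fixes w :: "'a::real_inner"
  assumes "a \<ge> 0" "\<sigma> \<ge> 0"
  shows "(Ffun a \<sigma> has_derivative (\<lambda>h. ((ffun a \<sigma> (norm w) / norm w) *\<^sub>R w) \<bullet> h)) (at w)"
proof (cases "w = 0")
  case True
  have "norm (Ffun a \<sigma> v) \<le> e * norm v" if "norm v < e" for v :: 'a and e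
    using abs_Ffun_le[OF assms, of v] that
    by (simp add: power2_eq_square) (meson mult_right_mono norm_ge_zero order.trans less_imp_le)
  moreover have "Ffun a \<sigma> (0::'a) = 0"
    by (simp add: Ffun_def)
  ultimately have "(Ffun a \<sigma> has_derivative (\<lambda>h. 0)) (at (0::'a))"
    unfolding has_derivative_at_alt by (auto intro!: exI[of _ "_ :: real"])
  with True show ?thesis by simp
next
  case False
  then show ?thesis
    unfolding Ffun_def[abs_def]
    by (intro has_derivative_radial has_real_derivative_integral_ffun) (use assms in auto)
qed

lemma grad_eqI:
  assumes "(h has_derivative (\<lambda>v. p \<bullet> v)) (at x)"
  shows "grad h x = p"
proof -
  have "frechet_derivative h (at x) = (\<lambda>v. p \<bullet> v)"
    using frechet_derivative_at[OF assms] by simp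
  then show ?thesis by (simp add: grad_def euclidean_representation)
qed

lemma grad_Fc:
  fixes x c :: "'a::euclidean_space"
  assumes "a \<ge> 0" "\<sigma> \<ge> 0"
  shows "grad (Fc a \<sigma> c) x = (ffun a \<sigma> (norm (x - c)) / norm (x - c)) *\<^sub>R (x - c)"
proof (rule grad_eqI)
  have "((\<lambda>w. w - c) has_derivative (\<lambda>h. h)) (at x)"
    by (auto intro!: derivative_eq_intros)
  from has_derivative_compose[OF this Ffun_has_derivative[OF assms]]
  show "(Fc a \<sigma> c has_derivative
      (\<lambda>v. ((ffun a \<sigma> (norm (x - c)) / norm (x - c)) *\<^sub>R (x - c)) \<bullet> v)) (at x)"
    by (simp add: Fc_def[abs_def] o_def)
qed

lemma has_real_derivative_radial_profile:
  fixes x :: "'a::real_normed_vector"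
  assumes "(\<lambda>w. \<phi> (norm w)) differentiable (at x)" "x \<noteq> 0"
  shows "(\<phi> has_real_derivative deriv \<phi> (norm x)) (at (norm x))"
proof -
  have "((\<lambda>w. \<phi> (norm w)) \<circ> (\<lambda>r. r *\<^sub>R sgn x)) differentiable (at (norm x))"
    by (rule differentiable_chain_at) (use assms in \<open>auto simp: sgn_div_norm\<close>)
  then obtain D where D: "(((\<lambda>w. \<phi> (norm w)) \<circ> (\<lambda>r. r *\<^sub>R sgn x)) has_derivative D) (at (norm x))"
    unfolding differentiable_def by blast
  have "(\<phi> has_derivative D) (at (norm x))"
    by (rule has_derivative_transform_within_open[OF D, of "{0<..}"])
      (use assms in \<open>auto simp: norm_sgn\<close>)
  then show ?thesis
    unfolding DERIV_deriv_iff_real_differentiable differentiable_def by blast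
qed

lemma antimono_on_imp_deriv_nonpos:
  assumes "antimono_on A f" "(f has_real_derivative D) (at x)" "x \<in> interior A"
  shows "D \<le> 0"
proof -
  have "mono_on A (\<lambda>x. - f x)"
    using assms(1) by (auto simp: monotone_on_def)
  then have "0 \<le> - D"
    by (rule mono_on_imp_deriv_nonneg[OF _ DERIV_minus[OF assms(2)] assms(3)])
  then show ?thesis by simp
qed

lemma comm_fun_radial:
  fixes x c :: "'a::euclidean_space"
  assumes "a \<ge> 0" "\<sigma> \<ge> 0" "(V0 has_real_derivative d) (at (norm x))" "x \<noteq> 0"
  shows "comm_fun a \<sigma> (\<lambda>w. V0 (norm w)) c x
    = - 2 * (d / norm x) * (ffun a \<sigma> (norm (x - c)) / norm (x - c) * ((x - c) \<bullet> x))"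
proof -
  have "grad (\<lambda>w. V0 (norm w)) x = (d / norm x) *\<^sub>R x"
    by (intro grad_eqI has_derivative_radial assms)
  then show ?thesis
    by (simp add: comm_fun_def grad_Fc assms)
qed

lemma div_sqrt_square_add_mono:
  fixes s t Y :: real
  assumes "s \<le> t" "0 \<le> Y"
  shows "s / sqrt (s\<^sup>2 + Y) \<le> t / sqrt (t\<^sup>2 + Y)"
proof -
  have nonneg: "s / sqrt (s\<^sup>2 + Y) \<le> t / sqrt (t\<^sup>2 + Y)" if "0 \<le> s" "s \<le> t" for s t
  proof (cases "s = 0")
    case False
    with that have "s\<^sup>2 * (t\<^sup>2 + Y) \<le> t\<^sup>2 * (s\<^sup>2 + Y)"
      using assms(2) by (simp add: algebra_simps mult_left_mono power_mono)
    then have "s\<^sup>2 / (s\<^sup>2 + Y) \<le> t\<^sup>2 / (t\<^sup>2 + Y)"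
      using False that assms(2) by (simp add: divide_simps add_pos_nonneg)
    then have "sqrt (s\<^sup>2 / (s\<^sup>2 + Y)) \<le> sqrt (t\<^sup>2 / (t\<^sup>2 + Y))"
      by simp
    with that show ?thesis by (simp add: real_sqrt_divide)
  qed (use that assms in simp)
  consider "0 \<le> s" | "t \<le> 0" | "s < 0" "0 < t" by linarith
  then show ?thesis
  proof cases
    case 1
    with nonneg assms show ?thesis by blast
  next
    case 2
    with nonneg[of "- t" "- s"] assms show ?thesis by simp
  next
    case 3
    then have "s / sqrt (s\<^sup>2 + Y) \<le> 0" "0 \<le> t / sqrt (t\<^sup>2 + Y)"
      using assms by (simp_all add: divide_nonpos_nonneg)
    then show ?thesis by linarith
  qed
qed

lemma sum_cross_ratios_nonneg:
  fixes p c Y :: real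
  assumes "0 \<le> Y"
  shows "0 \<le> p * (p + c) / sqrt ((p + c)\<^sup>2 + Y) + p * (p - c) / sqrt ((p - c)\<^sup>2 + Y)"
proof -
  define h where "h t = t / sqrt (t\<^sup>2 + Y)" for t
  have "0 \<le> p * (h (p + c) - h (c - p))"
  proof (cases "0 \<le> p")
    case True
    then have "h (c - p) \<le> h (p + c)"
      unfolding h_def by (intro div_sqrt_square_add_mono assms) simp
    with True show ?thesis by simp
  next
    case False
    then have "h (p + c) \<le> h (c - p)"
      unfolding h_def by (intro div_sqrt_square_add_mono assms) simp
    with False show ?thesis by (simp add: mult_nonpos_nonpos)
  qed
  then show ?thesis
    by (simp add: h_def power2_commute[of p c] algebra_simps diff_divide_distrib)
qed

lemma cross_terms_nonneg:
  fixes f :: "real \<Rightarrow> real" and p c Y :: real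
  assumes f: "mono_on {0..} f" "f 0 = 0" and Y: "0 \<le> Y"
  shows "0 \<le> f (sqrt ((p + c)\<^sup>2 + Y)) / sqrt ((p + c)\<^sup>2 + Y) * (p * (p + c))
           + f (sqrt ((p - c)\<^sup>2 + Y)) / sqrt ((p - c)\<^sup>2 + Y) * (p * (p - c))"
    (is "0 \<le> ?S c")
proof -
  have same_sign: "0 \<le> ?S c" if pc: "0 \<le> p * c" for c
  proof -
    define Dp where "Dp = sqrt ((p + c)\<^sup>2 + Y)"
    define Dm where "Dm = sqrt ((p - c)\<^sup>2 + Y)"
    have "0 \<le> Dm"
      by (simp add: Dm_def Y add_nonneg_nonneg)
    moreover have "Dm \<le> Dp"
      using pc by (simp add: Dm_def Dp_def power2_eq_square algebra_simps)
    ultimately have "f Dm \<le> f Dp" "0 \<le> f Dm"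
      using mono_onD[OF f(1), of Dm Dp] mono_onD[OF f(1), of 0 Dm] f(2) by auto
    moreover have "0 \<le> p * (p + c) / Dp"
      using pc Y by (auto simp: Dp_def distrib_left intro!: divide_nonneg_nonneg add_nonneg_nonneg)
    moreover have "0 \<le> p * (p + c) / Dp + p * (p - c) / Dm"
      unfolding Dp_def Dm_def by (rule sum_cross_ratios_nonneg[OF Y])
    ultimately have "0 \<le> (f Dp - f Dm) * (p * (p + c) / Dp) + f Dm * (p * (p + c) / Dp + p * (p - c) / Dm)"
      by (intro add_nonneg_nonneg[OF mult_nonneg_nonneg mult_nonneg_nonneg]) simp_all
    then show ?thesis
      by (simp add: Dp_def Dm_def algebra_simps)
  qed
  show ?thesis
  proof (cases "0 \<le> p * c")
    case False
    with same_sign[of "- c"] show ?thesis by (simp add: add.commute)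
  qed (rule same_sign)
qed

lemma inner_unit_power2_le:
  fixes x u :: "'a::real_inner"
  assumes "norm u = 1"
  shows "(x \<bullet> u)\<^sup>2 \<le> (norm x)\<^sup>2"
  using Cauchy_Schwarz_ineq2[of x u] assms by (simp add: abs_le_square_iff[symmetric])

lemma inner_radial_pair_ge:
  fixes x u :: "'a::real_inner" and f :: "real \<Rightarrow> real" and t :: real
  assumes f: "mono_on {0..} f" "f 0 = 0" and u: "norm u = 1"
  defines "c \<equiv> t *\<^sub>R u"
  shows "min (f (norm (x + c))) (f (norm (x - c))) * (2 * ((norm x)\<^sup>2 - (x \<bullet> u)\<^sup>2)) / (norm x + \<bar>t\<bar>)
    \<le> f (norm (x + c)) / norm (x + c) * ((x + c) \<bullet> x) + f (norm (x - c)) / norm (x - c) * ((x - c) \<bullet> x)"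
proof -
  define p where "p = x \<bullet> u"
  define Y where "Y = (norm x)\<^sup>2 - p\<^sup>2"
  define N where "N = norm x + \<bar>t\<bar>"
  define m where "m = min (f (norm (x + c))) (f (norm (x - c)))"
  have Y: "0 \<le> Y"
    using inner_unit_power2_le[OF u, of x] by (simp add: Y_def p_def)
  have uu: "u \<bullet> u = 1" and xx: "x \<bullet> x = p\<^sup>2 + Y"
    using u by (simp_all add: Y_def power2_norm_eq_inner[symmetric])
  have inner: "(x + c) \<bullet> x = p * (p + t) + Y" "(x - c) \<bullet> x = p * (p - t) + Y"
    using xx by (simp_all add: c_def p_def inner_add_left inner_diff_left inner_commute algebra_simps power2_eq_square)
  have norms: "norm (x + c) = sqrt ((p + t)\<^sup>2 + Y)" "norm (x - c) = sqrt ((p - t)\<^sup>2 + Y)"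
    using xx uu by (simp_all add: norm_eq_sqrt_inner c_def p_def inner_add inner_diff inner_commute
        algebra_simps power2_eq_square)
  have f_nonneg: "0 \<le> f r" if "0 \<le> r" for r
    using mono_onD[OF f(1), of 0 r] f(2) that by simp
  then have m: "0 \<le> m"
    by (simp add: m_def)
  have transverse: "m / N \<le> f (norm v) / norm v" if "norm v \<le> N" "m \<le> f (norm v)" for v :: 'a
  proof (cases "v = 0")
    case True
    then show ?thesis using that f(2) m by simp
  next
    case False
    then show ?thesis using that m by (intro frac_le) auto
  qed
  have "norm (x + c) \<le> N" "norm (x - c) \<le> N"
    using norm_triangle_ineq[of x c] norm_triangle_ineq4[of x c] u by (simp_all add: N_def c_def)
  then have "m / N * Y + m / N * Y \<le> f (norm (x + c)) / norm (x + c) * Y + f (norm (x - c)) / norm (x - c) * Y"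
    using transverse[of "x + c"] transverse[of "x - c"] Y
    by (intro add_mono mult_right_mono) (auto simp: m_def)
  moreover have "0 \<le> f (norm (x + c)) / norm (x + c) * (p * (p + t)) + f (norm (x - c)) / norm (x - c) * (p * (p - t))"
    unfolding norms by (rule cross_terms_nonneg[OF f Y])
  moreover have "m * (2 * Y) / N = m / N * Y + m / N * Y"
    by simp
  ultimately show ?thesis
    unfolding p_def[symmetric] Y_def[symmetric] m_def[symmetric] N_def[symmetric] inner distrib_left
    by linarith
qed

lemma comm_fun_pair_ge:
  fixes x u :: "'a::euclidean_space" and t :: real
  assumes a: "a \<ge> 0" and \<sigma>: "\<sigma> \<ge> 0" and V0': "(V0 has_real_derivative d) (at (norm x))"
    and d: "d \<le> 0" and x: "x \<noteq> 0" and u: "norm u = 1"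
  defines "c \<equiv> t *\<^sub>R u"
  shows "let M = - 2 * d * min (ffun a \<sigma> (norm (x + c))) (ffun a \<sigma> (norm (x - c)))
               * (2 * ((norm x)\<^sup>2 - (x \<bullet> u)\<^sup>2) / norm x) * (1 / (norm x + \<bar>t\<bar>))
         in M \<le> comm_fun a \<sigma> (\<lambda>w. V0 (norm w)) (- c) x + comm_fun a \<sigma> (\<lambda>w. V0 (norm w)) c x
            \<and> 0 \<le> M"
proof -
  define m where "m = min (ffun a \<sigma> (norm (x + c))) (ffun a \<sigma> (norm (x - c)))"
  define y2 where "y2 = (norm x)\<^sup>2 - (x \<bullet> u)\<^sup>2"
  define S where "S = ffun a \<sigma> (norm (x + c)) / norm (x + c) * ((x + c) \<bullet> x)
    + ffun a \<sigma> (norm (x - c)) / norm (x - c) * ((x - c) \<bullet> x)"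
  have factor: "0 \<le> - 2 * d / norm x"
    using d by (simp add: divide_nonpos_nonneg)
  have comm: "comm_fun a \<sigma> (\<lambda>w. V0 (norm w)) (- c) x + comm_fun a \<sigma> (\<lambda>w. V0 (norm w)) c x
      = - 2 * d / norm x * S"
    using comm_fun_radial[OF a \<sigma> V0' x, of "- c"] comm_fun_radial[OF a \<sigma> V0' x, of c]
    by (simp add: S_def algebra_simps)
  have lower: "m * (2 * y2) / (norm x + \<bar>t\<bar>) \<le> S"
    using inner_radial_pair_ge[OF mono_on_ffun[OF a] ffun_0 u, where x=x and t=t]
    by (simp add: S_def m_def y2_def c_def)
  have lower_nonneg: "0 \<le> m * (2 * y2) / (norm x + \<bar>t\<bar>)"
    using ffun_nonneg[OF a] inner_unit_power2_le[OF u, of x] by (simp add: m_def y2_def)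
  have M: "- 2 * d * m * (2 * y2 / norm x) * (1 / (norm x + \<bar>t\<bar>))
      = - 2 * d / norm x * (m * (2 * y2) / (norm x + \<bar>t\<bar>))"
    by simp
  show ?thesis
    unfolding Let_def m_def[symmetric] y2_def[symmetric] comm M
    using mult_left_mono[OF lower factor] mult_nonneg_nonneg[OF factor lower_nonneg] by (intro conjI)
qed

theorem lemma2p2:
  fixes a \<sigma> c1 :: real and V0 :: "real \<Rightarrow> real" and i0 :: "'n::finite" and x :: "real ^ 'n"
  assumes n3: "CARD('n) \<ge> 3"
    and a_pos: "a > 0" and sigma: "\<sigma> > 1 / 2"
    and V_diff: "\<forall>z::real^'n. (\<lambda>w. V0 (norm w)) differentiable (at z)"
    and V_C1: "continuous_on UNIV (grad (\<lambda>w::real^'n. V0 (norm w)))"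
    and V0_decr: "\<forall>r s. 0 \<le> r \<longrightarrow> r \<le> s \<longrightarrow> V0 s \<le> V0 r"
    and x_ne: "x \<noteq> 0"
  shows
    "let c = c1 *\<^sub>R axis i0 1;
         V = (\<lambda>w::real^'n. V0 (norm w));
         y2 = (norm x)\<^sup>2 - (x $ i0)\<^sup>2;
         M = - 2 * deriv V0 (norm x)
               * min (ffun a \<sigma> (norm (x + c))) (ffun a \<sigma> (norm (x - c)))
               * (2 * y2 / norm x) * (1 / (norm x + norm c))
     in comm_fun a \<sigma> V (- c) x + comm_fun a \<sigma> V c x \<ge> M \<and> M \<ge> 0"
  \<comment> \<open>The pointwise estimate only needs \<open>\<sigma> \<ge> 0\<close>.\<close>
proof -
  have V0': "(V0 has_real_derivative deriv V0 (norm x)) (at (norm x))"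
    using has_real_derivative_radial_profile[OF V_diff[rule_format] x_ne] .
  have "antimono_on {0..} V0"
    using V0_decr by (auto intro: monotone_onI)
  then have "deriv V0 (norm x) \<le> 0"
    using V0' x_ne by (intro antimono_on_imp_deriv_nonpos) auto
  have "0 \<le> a" "0 \<le> \<sigma>"
    using a_pos sigma by simp_all
  with comm_fun_pair_ge[OF _ _ V0' _ x_ne norm_axis_1[of i0], of a \<sigma> c1] \<open>deriv V0 (norm x) \<le> 0\<close>
  show ?thesis
    by (simp only: Let_def inner_axis inner_real_def norm_scaleR norm_axis_1 mult_1_right)
qed

end
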